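(* Let $A,B\subset\mathbb{R}^n$ be set-germs at $0$ with $0\in\overline{A}\cap\overline{B}$, and let $h:(\mathbb{R}^n,0)\to(\mathbb{R}^n,0)$ be a bi-Lipschitz homeomorphism (germ). Suppose that $B$ satisfies condition $(SSP)$. If $D(A)\subset D(B)$, then $D(h(A))\subset D(h(B))$.
   Context: A bi-Lipschitz homeomorphism germ is a homeomorphism between neighbourhoods of $0$ fixing $0$ with $K_1|x-y|\le|h(x)-h(y)|\le K_2|x-y|$ for some $0<K_1\le K_2$ near $0$. Direction set: $D(A)=\{a\in S^{n-1} : \exists\, \{x_i\}\subset A\setminus\{0\},\ x_i\to 0,\ x_i/\|x_i\|\to a\}$. A set-germ $B$ with $0\in\overline{B}$ satisfies condition $(SSP)$ if for every sequence $\{a_m\}\subset\mathbb{R}^n$ with $a_m\to0$ and $\lim a_m/\|a_m\|\in D(B)$ there is a sequence $\{b_m\}\subset B$ with $\|a_m-b_m\|/\|a_m\|\to0$ and $\|a_m-b_m\|/\|b_m\|\to0$. *)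

theory Defs
  imports "HOL-Analysis.Analysis"
begin

definition direction_set :: "'a::euclidean_space set \<Rightarrow> 'a set" where
  "direction_set A = {a \<in> sphere 0 1. \<exists>x::nat \<Rightarrow> 'a.
      (\<forall>i. x i \<in> A - {0}) \<and> x \<longlonglongrightarrow> 0 \<and>
      (\<lambda>i. x i /\<^sub>R norm (x i)) \<longlonglongrightarrow> a}"

text \<open>Condition (SSP) for a set-germ B at 0 (sequences a_m are taken nonzero,
  as required for a_m/|a_m| to make sense).\<close>
definition SSP :: "'a::euclidean_space set \<Rightarrow> bool" where
  "SSP B \<longleftrightarrow> (\<forall>a::nat \<Rightarrow> 'a. \<forall>d.
      (\<forall>m. a m \<noteq> 0) \<and> a \<longlonglongrightarrow> 0 \<and>
      (\<lambda>m. a m /\<^sub>R norm (a m)) \<longlonglongrightarrow> d \<and> d \<in> direction_set B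
      \<longrightarrow> (\<exists>b::nat \<Rightarrow> 'a. (\<forall>m. b m \<in> B) \<and>
             (\<lambda>m. norm (a m - b m) / norm (a m)) \<longlonglongrightarrow> 0 \<and>
             (\<lambda>m. norm (a m - b m) / norm (b m)) \<longlonglongrightarrow> 0))"

text \<open>A bi-Lipschitz homeomorphism germ at 0, represented on an open
  neighbourhood U of 0 mapped homeomorphically onto an open neighbourhood of 0.\<close>
definition bilipschitz_homeo_germ :: "'a::euclidean_space set \<Rightarrow> ('a \<Rightarrow> 'a) \<Rightarrow> bool" where
  "bilipschitz_homeo_germ U h \<longleftrightarrow>
     open U \<and> 0 \<in> U \<and> h 0 = 0 \<and>
     (\<exists>V g. open V \<and> homeomorphism U V h g) \<and>
     (\<exists>K1 K2. 0 < K1 \<and> K1 \<le> K2 \<and>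
        (\<forall>x\<in>U. \<forall>y\<in>U. K1 * norm (x - y) \<le> norm (h x - h y) \<and>
                        norm (h x - h y) \<le> K2 * norm (x - y)))"

end

theory Submission
  imports Defs
begin

(* Pull a sequence realising a direction d of h(A) back to A and pass to a subsequence whose
  directions converge to some a in D(A), hence in D(B). (SSP) then yields b_m in B with
  |x_m - b_m| = o(|x_m|); since h is bi-Lipschitz,
  |h x_m - h b_m| = o(|h x_m|), so h b_m has the same limiting direction d. *)

definition rel_close :: "(nat \<Rightarrow> 'a::real_normed_vector) \<Rightarrow> (nat \<Rightarrow> 'a) \<Rightarrow> bool" where
  "rel_close u v \<longleftrightarrow> (\<lambda>i. norm (u i - v i) / norm (u i)) \<longlonglongrightarrow> 0"

lemma norm_diff_normalized_le:
  fixes u v :: "'a::real_normed_vector"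
  assumes "u \<noteq> 0" "v \<noteq> 0"
  shows "norm (u /\<^sub>R norm u - v /\<^sub>R norm v) \<le> 2 * (norm (u - v) / norm u)"
proof -
  have pos: "norm u > 0" "norm v > 0" using assms by auto
  have decomp: "u /\<^sub>R norm u - v /\<^sub>R norm v
      = (u - v) /\<^sub>R norm u + (inverse (norm u) - inverse (norm v)) *\<^sub>R v"
    using pos by (simp add: algebra_simps)
  have "norm ((inverse (norm u) - inverse (norm v)) *\<^sub>R v) = \<bar>norm v - norm u\<bar> / norm u"
    using pos by (simp add: field_simps abs_mult[symmetric] abs_divide)
  also have "\<dots> \<le> norm (u - v) / norm u"
    using pos norm_triangle_ineq3[of v u] by (simp add: divide_right_mono norm_minus_commute)
  finally have "norm ((inverse (norm u) - inverse (norm v)) *\<^sub>R v) \<le> norm (u - v) / norm u" .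
  moreover have "norm ((u - v) /\<^sub>R norm u) = norm (u - v) / norm u"
    by (simp add: divide_inverse_commute)
  ultimately show ?thesis
    unfolding decomp
    using norm_triangle_ineq[of "(u - v) /\<^sub>R norm u" "(inverse (norm u) - inverse (norm v)) *\<^sub>R v"]
    by linarith
qed

lemma rel_close_eventually_nonzero:
  assumes "\<And>i. u i \<noteq> 0" and "rel_close u v"
  shows "\<forall>\<^sub>F i in sequentially. v i \<noteq> 0"
  using order_tendstoD(2)[OF assms(2)[unfolded rel_close_def] zero_less_one]
  by eventually_elim (use assms(1) in auto)

lemma rel_close_tendsto_zero:
  assumes "\<And>i. u i \<noteq> 0" and "rel_close u v" and "u \<longlonglongrightarrow> 0"
  shows "v \<longlonglongrightarrow> 0"
proof -
  have "(\<lambda>i. norm (u i - v i) / norm (u i) * norm (u i)) \<longlonglongrightarrow> 0"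
    using tendsto_mult[OF assms(2)[unfolded rel_close_def] tendsto_norm[OF assms(3)]] by simp
  then have "(\<lambda>i. u i - v i) \<longlonglongrightarrow> 0"
    using assms(1) by (simp add: tendsto_norm_zero_iff)
  from tendsto_diff[OF assms(3) this] show ?thesis by simp
qed

lemma rel_close_tendsto_normalized:
  assumes "\<And>i. u i \<noteq> 0" and "rel_close u v" and "(\<lambda>i. u i /\<^sub>R norm (u i)) \<longlonglongrightarrow> d"
  shows "(\<lambda>i. v i /\<^sub>R norm (v i)) \<longlonglongrightarrow> d"
proof -
  have "(\<lambda>i. u i /\<^sub>R norm (u i) - v i /\<^sub>R norm (v i)) \<longlonglongrightarrow> 0"
  proof (rule Lim_null_comparison)
    show "\<forall>\<^sub>F i in sequentially.
        norm (u i /\<^sub>R norm (u i) - v i /\<^sub>R norm (v i)) \<le> 2 * (norm (u i - v i) / norm (u i))"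
      using rel_close_eventually_nonzero[OF assms(1,2)]
      by eventually_elim (rule norm_diff_normalized_le[OF assms(1)])
    show "(\<lambda>i. 2 * (norm (u i - v i) / norm (u i))) \<longlonglongrightarrow> 0"
      using tendsto_mult_right_zero[OF assms(2)[unfolded rel_close_def]] .
  qed
  from tendsto_diff[OF assms(3) this] show ?thesis by simp
qed

lemma direction_setI:
  fixes x :: "nat \<Rightarrow> 'a::euclidean_space"
  assumes "\<forall>\<^sub>F i in sequentially. x i \<in> A - {0}" and "x \<longlonglongrightarrow> 0"
    and "(\<lambda>i. x i /\<^sub>R norm (x i)) \<longlonglongrightarrow> d"
  shows "d \<in> direction_set A"
proof -
  obtain N where N: "\<And>i. i \<ge> N \<Longrightarrow> x i \<in> A - {0}"
    using assms(1) unfolding eventually_sequentially by blast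
  have "\<forall>\<^sub>F i in sequentially. norm (x i /\<^sub>R norm (x i)) = 1"
    using assms(1) by eventually_elim simp
  then have "(\<lambda>i. norm (x i /\<^sub>R norm (x i))) \<longlonglongrightarrow> 1"
    by (simp add: tendsto_eventually)
  with tendsto_norm[OF assms(3)] have "d \<in> sphere 0 1"
    using LIMSEQ_unique by fastforce
  moreover have "(\<lambda>i. x (i + N)) \<longlonglongrightarrow> 0" "(\<lambda>i. x (i + N) /\<^sub>R norm (x (i + N))) \<longlonglongrightarrow> d"
    using LIMSEQ_ignore_initial_segment[OF assms(2)] LIMSEQ_ignore_initial_segment[OF assms(3)]
    by auto
  ultimately show ?thesis
    unfolding direction_set_def using N by (intro CollectI conjI exI[of _ "\<lambda>i. x (i + N)"]) auto
qed

lemma direction_set_convergent_subseq: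
  fixes x :: "nat \<Rightarrow> 'a::euclidean_space"
  assumes "\<And>i. x i \<in> A - {0}" and "x \<longlonglongrightarrow> 0"
  obtains r a where "strict_mono r" and "a \<in> direction_set A"
    and "(\<lambda>i. x (r i) /\<^sub>R norm (x (r i))) \<longlonglongrightarrow> a"
proof -
  have "\<forall>i. x i /\<^sub>R norm (x i) \<in> sphere 0 1" using assms(1) by simp
  then obtain a r where r: "strict_mono r"
    and lim: "((\<lambda>i. x i /\<^sub>R norm (x i)) \<circ> r) \<longlonglongrightarrow> a"
    by (rule seq_compactE[OF compact_imp_seq_compact[OF compact_sphere]])
  have "a \<in> direction_set A"
  proof (rule direction_setI[where x = "\<lambda>i. x (r i)"])
    show "\<forall>\<^sub>F i in sequentially. x (r i) \<in> A - {0}" using assms(1) by simp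
    show "(\<lambda>i. x (r i)) \<longlonglongrightarrow> 0" using LIMSEQ_subseq_LIMSEQ[OF assms(2) r] by (simp add: o_def)
    show "(\<lambda>i. x (r i) /\<^sub>R norm (x (r i))) \<longlonglongrightarrow> a" using lim by (simp add: o_def)
  qed
  with r lim show ?thesis using that by (simp add: o_def)
qed

locale bilipschitz_at_zero =
  fixes U :: "'a::real_normed_vector set" and h :: "'a \<Rightarrow> 'b::real_normed_vector"
    and K1 K2 :: real
  assumes open_dom: "open U" and zero_in_dom: "0 \<in> U" and map_zero: "h 0 = 0"
    and K1_pos: "0 < K1"
    and lower: "x \<in> U \<Longrightarrow> y \<in> U \<Longrightarrow> K1 * norm (x - y) \<le> norm (h x - h y)"
    and upper: "x \<in> U \<Longrightarrow> y \<in> U \<Longrightarrow> norm (h x - h y) \<le> K2 * norm (x - y)"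
begin

lemma norm_lower: "x \<in> U \<Longrightarrow> K1 * norm x \<le> norm (h x)"
  using lower[of x 0] zero_in_dom map_zero by simp

lemma image_nonzero:
  assumes "x \<in> U" "x \<noteq> 0"
  shows "h x \<noteq> 0"
proof -
  have "0 < K1 * norm x" using K1_pos assms(2) by simp
  also have "\<dots> \<le> norm (h x)" by (rule norm_lower[OF assms(1)])
  finally show ?thesis by simp
qed

lemma rel_error_le:
  assumes "x \<in> U" "b \<in> U" "x \<noteq> 0"
  shows "norm (h x - h b) / norm (h x) \<le> K2 / K1 * (norm (x - b) / norm x)"
proof -
  have "norm (h x - h b) / norm (h x) \<le> K2 * norm (x - b) / (K1 * norm x)"
  proof (rule frac_le)
    show "norm (h x - h b) \<le> K2 * norm (x - b)" using upper assms by simp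
    then show "0 \<le> K2 * norm (x - b)" using norm_ge_zero order_trans by blast
    show "0 < K1 * norm x" using K1_pos assms(3) by simp
    show "K1 * norm x \<le> norm (h x)" by (rule norm_lower[OF assms(1)])
  qed
  then show ?thesis by simp
qed

lemma tendsto_zero_preimage:
  assumes "\<And>i. x i \<in> U" and "(\<lambda>i. h (x i)) \<longlonglongrightarrow> 0"
  shows "x \<longlonglongrightarrow> 0"
proof (rule Lim_null_comparison)
  have "norm (x i) \<le> norm (h (x i)) / K1" for i
    using norm_lower[OF assms(1)] K1_pos by (simp add: pos_le_divide_eq mult.commute)
  then show "\<forall>\<^sub>F i in sequentially. norm (x i) \<le> norm (h (x i)) / K1"
    by (intro always_eventually allI)
  show "(\<lambda>i. norm (h (x i)) / K1) \<longlonglongrightarrow> 0"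
    using tendsto_divide_zero[OF tendsto_norm_zero[OF assms(2)]] .
qed

lemma rel_close_image:
  assumes "\<And>i. x i \<in> U - {0}" and "\<forall>\<^sub>F i in sequentially. b i \<in> U" and "rel_close x b"
  shows "rel_close (\<lambda>i. h (x i)) (\<lambda>i. h (b i))"
  unfolding rel_close_def
proof (rule Lim_null_comparison)
  show "\<forall>\<^sub>F i in sequentially. norm (norm (h (x i) - h (b i)) / norm (h (x i)))
      \<le> K2 / K1 * (norm (x i - b i) / norm (x i))"
  proof (rule eventually_mono[OF assms(2)])
    fix i assume bi: "b i \<in> U"
    have xi: "x i \<in> U" "x i \<noteq> 0" using assms(1)[of i] by simp_all
    from rel_error_le[OF xi(1) bi xi(2)]
    show "norm (norm (h (x i) - h (b i)) / norm (h (x i)))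
        \<le> K2 / K1 * (norm (x i - b i) / norm (x i))"
      by simp
  qed
  show "(\<lambda>i. K2 / K1 * (norm (x i - b i) / norm (x i))) \<longlonglongrightarrow> 0"
    using tendsto_mult_right_zero[OF assms(3)[unfolded rel_close_def]] .
qed

end

lemma bilipschitz_homeo_germ_imp_bilipschitz_at_zero:
  assumes "bilipschitz_homeo_germ U h"
  obtains K1 K2 where "bilipschitz_at_zero U h K1 K2"
proof -
  from assms obtain K1 K2 where "0 < K1" "K1 \<le> K2"
    and "\<forall>x\<in>U. \<forall>y\<in>U. K1 * norm (x - y) \<le> norm (h x - h y) \<and>
                         norm (h x - h y) \<le> K2 * norm (x - y)"
    unfolding bilipschitz_homeo_germ_def by blast
  with assms have "bilipschitz_at_zero U h K1 K2"
    unfolding bilipschitz_homeo_germ_def by unfold_locales simp_all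
  then show ?thesis by (rule that)
qed

lemma direction_set_imageE:
  fixes h :: "'a::euclidean_space \<Rightarrow> 'a"
  assumes "bilipschitz_at_zero U h K1 K2" and "d \<in> direction_set (h ` (A \<inter> U))"
  obtains x where "\<And>i. x i \<in> A \<inter> U - {0}" and "x \<longlonglongrightarrow> 0" and "(\<lambda>i. h (x i)) \<longlonglongrightarrow> 0"
    and "(\<lambda>i. h (x i) /\<^sub>R norm (h (x i))) \<longlonglongrightarrow> d"
proof -
  interpret bilipschitz_at_zero U h K1 K2 by fact
  obtain y where yA: "\<And>i. y i \<in> h ` (A \<inter> U)" and y_nz: "\<And>i. y i \<noteq> 0"
    and y0: "y \<longlonglongrightarrow> 0" and yd: "(\<lambda>i. y i /\<^sub>R norm (y i)) \<longlonglongrightarrow> d"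
    using assms(2) unfolding direction_set_def by blast
  have "\<forall>i. \<exists>x. x \<in> A \<inter> U \<and> h x = y i" using yA by (metis imageE)
  from choice[OF this] obtain x where "\<forall>i. x i \<in> A \<inter> U \<and> h (x i) = y i" ..
  then have xA: "\<And>i. x i \<in> A \<inter> U" and hx: "\<And>i. h (x i) = y i" by simp_all
  show ?thesis
  proof (rule that)
    show "x i \<in> A \<inter> U - {0}" for i
      using xA[of i] hx[of i] y_nz[of i] map_zero by auto
    show hx0: "(\<lambda>i. h (x i)) \<longlonglongrightarrow> 0" using y0 by (simp add: hx)
    show "x \<longlonglongrightarrow> 0" using tendsto_zero_preimage[OF _ hx0] xA by blast
    show "(\<lambda>i. h (x i) /\<^sub>R norm (h (x i))) \<longlonglongrightarrow> d" using yd by (simp add: hx)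
  qed
qed

lemma direction_set_image_rel_close:
  fixes h :: "'a::euclidean_space \<Rightarrow> 'a"
  assumes "bilipschitz_at_zero U h K1 K2"
    and x: "\<And>i. x i \<in> U - {0}" and "x \<longlonglongrightarrow> 0" and "(\<lambda>i. h (x i)) \<longlonglongrightarrow> 0"
    and "(\<lambda>i. h (x i) /\<^sub>R norm (h (x i))) \<longlonglongrightarrow> d"
    and b: "\<And>i. b i \<in> B" and "rel_close x b"
  shows "d \<in> direction_set (h ` (B \<inter> U))"
proof -
  interpret bilipschitz_at_zero U h K1 K2 by fact
  have x_nz: "x i \<noteq> 0" and hx_nz: "h (x i) \<noteq> 0" for i
    using x[of i] image_nonzero by auto
  have "b \<longlonglongrightarrow> 0" by (rule rel_close_tendsto_zero[OF x_nz assms(7,3)])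
  then have bU: "\<forall>\<^sub>F i in sequentially. b i \<in> U"
    using open_dom zero_in_dom by (rule topological_tendstoD)
  have hb: "rel_close (\<lambda>i. h (x i)) (\<lambda>i. h (b i))"
    by (rule rel_close_image[OF x bU assms(7)])
  show ?thesis
  proof (rule direction_setI)
    show "\<forall>\<^sub>F i in sequentially. h (b i) \<in> h ` (B \<inter> U) - {0}"
      using bU rel_close_eventually_nonzero[OF hx_nz hb]
      by eventually_elim (metis b DiffI IntI imageI singletonD)
    show "(\<lambda>i. h (b i)) \<longlonglongrightarrow> 0"
      by (rule rel_close_tendsto_zero[OF hx_nz hb assms(4)])
    show "(\<lambda>i. h (b i) /\<^sub>R norm (h (b i))) \<longlonglongrightarrow> d"
      by (rule rel_close_tendsto_normalized[OF hx_nz hb assms(5)])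
  qed
qed

theorem proposition5p8:
  fixes A B U :: "'a::euclidean_space set" and h :: "'a \<Rightarrow> 'a"
  assumes "0 \<in> closure A" and "0 \<in> closure B"
    and "bilipschitz_homeo_germ U h"
    and "SSP B"
    and "direction_set A \<subseteq> direction_set B"
  shows "direction_set (h ` (A \<inter> U)) \<subseteq> direction_set (h ` (B \<inter> U))"
proof
  obtain K1 K2 where h: "bilipschitz_at_zero U h K1 K2"
    using assms(3) by (rule bilipschitz_homeo_germ_imp_bilipschitz_at_zero)
  fix d assume "d \<in> direction_set (h ` (A \<inter> U))"
  then obtain x where x: "\<And>i. x i \<in> A \<inter> U - {0}" and x0: "x \<longlonglongrightarrow> 0"
    and hx0: "(\<lambda>i. h (x i)) \<longlonglongrightarrow> 0" and hxd: "(\<lambda>i. h (x i) /\<^sub>R norm (h (x i))) \<longlonglongrightarrow> d"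
    using direction_set_imageE[OF h] by blast
  have "x i \<in> A - {0}" for i using x[of i] by simp
  then obtain r a where r: "strict_mono r" and "a \<in> direction_set A"
    and xa: "(\<lambda>i. x (r i) /\<^sub>R norm (x (r i))) \<longlonglongrightarrow> a"
    using x0 by (rule direction_set_convergent_subseq)
  with assms(5) have aB: "a \<in> direction_set B" by blast
  have xr: "\<forall>i. x (r i) \<noteq> 0" "\<And>i. x (r i) \<in> U - {0}" using x by auto
  have xr0: "(\<lambda>i. x (r i)) \<longlonglongrightarrow> 0" and hxr0: "(\<lambda>i. h (x (r i))) \<longlonglongrightarrow> 0"
    and hxrd: "(\<lambda>i. h (x (r i)) /\<^sub>R norm (h (x (r i)))) \<longlonglongrightarrow> d"
    using LIMSEQ_subseq_LIMSEQ[OF x0 r] LIMSEQ_subseq_LIMSEQ[OF hx0 r]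
      LIMSEQ_subseq_LIMSEQ[OF hxd r] by (simp_all add: o_def)
  obtain b where "\<And>i. b i \<in> B" and "rel_close (\<lambda>i. x (r i)) b"
    using assms(4)[unfolded SSP_def, rule_format, of "\<lambda>i. x (r i)" a] xr(1) xr0 xa aB
    unfolding rel_close_def by blast
  then show "d \<in> direction_set (h ` (B \<inter> U))"
    by (rule direction_set_image_rel_close[OF h xr(2) xr0 hxr0 hxrd])
qed

end
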